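(* If condition $(C_k)$ holds for some $k\in I_n$, then every equilibrium $u$ of the system lying in $\pi_k$ satisfies $\alpha_ku<1$.
   Context: Fix $n\ge 2$ and $I_m=\{1,\dots,m\}$. Consider the Lotka–Volterra system $x_i'=b_ix_i(1-\alpha_ix)$, $i\in I_n$, where $b_i>0$, $\alpha_i=(a_{i1},\dots,a_{in})$ with $a_{ii}>0$ and $a_{ij}\ge 0$, on $\mathbb{R}^n_+$. For $u\le v$ (componentwise), $[u,v]=\{x\in\mathbb{R}^n_+:u\le x\le v\}$. For $J\subset I_n$, $u^J_i=u_i$ for $i\in J$ and $0$ otherwise. $\pi_i=\{x\in\mathbb{R}^n_+:x_i=0\}$, $\gamma_i=\{x\in\mathbb{R}^n_+:\alpha_ix=1\}$. Define $U$ componentwise by: $U_i=a_{ii}^{-1}$ if $a_{ii}\le a_{ji}$ or $a_{ij}=0$ for some $j\ne i$; otherwise $U_i=0$ if $a_{ji}<a_{ii}$ and $a_{jk}\le a_{ik}$ for all $j,k\in I_n\setminus\{i\}$; otherwise $U_i=\max\{\frac{a_{kj}-a_{ij}}{a_{ii}a_{kj}-a_{ij}a_{ki}}: j,k\in I_n\setminus\{i\},\ a_{kj}>a_{ij}\}$. Condition $(C_k)$: either $\alpha_kU^{I_n\setminus\{k\}}<1$, or every $x\in\gamma_k\cap[0,U^{I_n\setminus\{k\}}]$ satisfies $\alpha_jx>1$ for all $j\in I_n\setminus\{k\}$. *)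

theory Defs
  imports "HOL-Analysis.Analysis"
begin

text \<open>Lotka--Volterra system x_i' = b_i x_i (1 - alpha_i x) on the nonnegative orthant
  of R^n, with indices ranging over a finite type 'n (so I_n = UNIV).
  The interaction matrix is A with A$i$j = a_ij; alpha_i = row i of A.\<close>

definition alpha :: "real^'n^'n \<Rightarrow> 'n \<Rightarrow> real^'n \<Rightarrow> real" where
  "alpha A i x = (\<Sum>j\<in>UNIV. A$i$j * x$j)"

definition nonneg :: "real^'n \<Rightarrow> bool" where
  "nonneg x \<longleftrightarrow> (\<forall>i. 0 \<le> x$i)"

definition LV_field :: "real^'n \<Rightarrow> real^'n^'n \<Rightarrow> real^'n \<Rightarrow> real^'n" where
  "LV_field b A x = (\<chi> i. b$i * x$i * (1 - alpha A i x))"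

definition equilibrium :: "real^'n \<Rightarrow> real^'n^'n \<Rightarrow> real^'n \<Rightarrow> bool" where
  "equilibrium b A u \<longleftrightarrow> nonneg u \<and> LV_field b A u = 0"

definition restr :: "'n set \<Rightarrow> real^'n \<Rightarrow> real^'n" where
  "restr J u = (\<chi> i. if i \<in> J then u$i else 0)"

definition box :: "real^'n \<Rightarrow> real^'n \<Rightarrow> (real^'n) set" where
  "box u v = {x. nonneg x \<and> (\<forall>i. u$i \<le> x$i \<and> x$i \<le> v$i)}"

definition gamma :: "real^'n^'n \<Rightarrow> 'n \<Rightarrow> (real^'n) set" where
  "gamma A i = {x. nonneg x \<and> alpha A i x = 1}"

definition pi_face :: "'n \<Rightarrow> (real^'n) set" where
  "pi_face i = {x. nonneg x \<and> x$i = 0}"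

definition Ubound :: "real^'n^'n \<Rightarrow> real^'n" where
  "Ubound A = (\<chi> i.
     if (\<exists>j. j \<noteq> i \<and> (A$i$i \<le> A$j$i \<or> A$i$j = 0)) then 1 / A$i$i
     else if (\<forall>j. j \<noteq> i \<longrightarrow> A$j$i < A$i$i) \<and>
             (\<forall>j k. j \<noteq> i \<longrightarrow> k \<noteq> i \<longrightarrow> A$j$k \<le> A$i$k) then 0
     else Max {(A$k$j - A$i$j) / (A$i$i * A$k$j - A$i$j * A$k$i) | j k.
                 j \<noteq> i \<and> k \<noteq> i \<and> A$k$j > A$i$j})"

definition cond_C :: "real^'n^'n \<Rightarrow> 'n \<Rightarrow> bool" where
  "cond_C A k \<longleftrightarrow>
     alpha A k (restr (UNIV - {k}) (Ubound A)) < 1 \<or>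
     (\<forall>x \<in> gamma A k \<inter> box 0 (restr (UNIV - {k}) (Ubound A)).
        \<forall>j. j \<noteq> k \<longrightarrow> alpha A j x > 1)"

end

theory Submission
  imports Defs
begin

(* Suppose u is an equilibrium in the face x_k = 0 with m = alpha_k u >= 1.
   Every coordinate of u is either zero or lies on its nullcline alpha_i u = 1, so the
   rescaled point x = u / m lies on gamma_k, has x_k = 0, and satisfies alpha_i x = 1/m <= 1
   wherever x_i > 0; we say x lies below the nullclines of its support.
   The heart of the argument is the a-priori bound: every point of gamma_k lying below the
   nullclines of its support satisfies x_i <= U_i for all i <> k.  It is proved separately
   for the three branches of the definition of U: a diagonal bound x_i <= 1/a_ii, a
   domination argument forcing x_i = 0, and a comparison of the two nullcline sums that
   produces an index j with x_i below the crossing ratio of (i,j,k).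
   Hence x lies in gamma_k intersected with [0, U^{I_n - k}], and both alternatives of
   (C_k) are contradicted: the first by monotonicity of alpha_k, the second at any
   coordinate j with x_j > 0 (such j exists and differs from k because alpha_k x = 1). *)

lemma alpha_split:
  "alpha A i x = A$i$l * x$l + (\<Sum>j\<in>UNIV-{l}. A$i$j * x$j)"
  unfolding alpha_def by (rule sum.remove) auto

text \<open>alpha_i is linear; homogeneity is what makes rescaling an equilibrium useful.\<close>
lemma alpha_scale: "alpha A i (c *\<^sub>R x) = c * alpha A i x"
  unfolding alpha_def by (simp add: sum_distrib_left algebra_simps)

lemma alpha_mono:
  assumes "\<forall>i j. A$i$j \<ge> 0" and "\<forall>j. x$j \<le> y$j"
  shows "alpha A i x \<le> alpha A i y"
  unfolding alpha_def using assms by (intro sum_mono mult_left_mono) auto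

lemma alpha_rest_nonneg:
  assumes "\<forall>i j. A$i$j \<ge> 0" and "nonneg x"
  shows "0 \<le> (\<Sum>j\<in>UNIV-{l}. A$i$j * x$j)"
  using assms unfolding nonneg_def by (intro sum_nonneg) auto

lemma equilibrium_coord:
  assumes "equilibrium b A u" and "b$i > 0"
  shows "u$i = 0 \<or> alpha A i u = 1"
proof -
  have "LV_field b A u $ i = 0" using assms(1) unfolding equilibrium_def by simp
  hence "b$i * u$i * (1 - alpha A i u) = 0" unfolding LV_field_def by simp
  thus ?thesis using assms(2) by simp
qed

text \<open>x lies on or below the nullcline alpha_i x = 1 of every species it contains.
  Rescaled equilibria have this property, and it is all the a-priori bound uses.\<close>
definition below_nullclines :: "real^'n^'n \<Rightarrow> real^'n \<Rightarrow> bool" where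
  "below_nullclines A x \<longleftrightarrow> (\<forall>i. 0 < x$i \<longrightarrow> alpha A i x \<le> 1)"

text \<open>The quantity maximised in the third branch of the definition of U.\<close>
definition crossing_ratio :: "real^'n^'n \<Rightarrow> 'n \<Rightarrow> 'n \<Rightarrow> 'n \<Rightarrow> real" where
  "crossing_ratio A i j k = (A$k$j - A$i$j) / (A$i$i * A$k$j - A$i$j * A$k$i)"

lemma crossing_ratio_threshold:
  fixes aii aki aij akj s :: real
  assumes "0 < aii" "aki < aii" "0 \<le> aij" "aij < akj"
  shows "0 < aii * akj - aij * aki"
    and "s \<le> (akj - aij) / (aii * akj - aij * aki) \<longleftrightarrow>
         aij * (1 - s * aki) \<le> akj * (1 - s * aii)"
proof -
  have "aij * aki \<le> aij * aii" using assms by (simp add: mult_left_mono)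
  also have "\<dots> < akj * aii" using assms by (simp add: mult_strict_right_mono)
  finally show den: "0 < aii * akj - aij * aki" by (simp add: algebra_simps)
  show "s \<le> (akj - aij) / (aii * akj - aij * aki) \<longleftrightarrow>
        aij * (1 - s * aki) \<le> akj * (1 - s * aii)"
    using den by (simp add: pos_le_divide_eq algebra_simps)
qed

section \<open>The a-priori bound x_i \<le> U_i on gamma_k\<close>

lemma coord_le_inv_diag:
  assumes nn: "\<forall>i j. A$i$j \<ge> 0" and aii: "0 < A$i$i" and xn: "nonneg x"
    and below: "below_nullclines A x"
  shows "x$i \<le> 1 / A$i$i"
proof (cases "0 < x$i")
  case True
  have "A$i$i * x$i \<le> alpha A i x"
    using alpha_split[of A i x i] alpha_rest_nonneg[OF nn xn, of i i] by simp
  also have "\<dots> \<le> 1" using below True unfolding below_nullclines_def by blast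
  finally show ?thesis using aii by (simp add: pos_le_divide_eq mult.commute)
next
  case False
  hence "x$i \<le> 0" by simp
  also have "\<dots> \<le> 1 / A$i$i" using aii by simp
  finally show ?thesis .
qed

lemma coord_zero_if_dominated:
  assumes xn: "nonneg x" and ak: "alpha A k x = 1" and below: "below_nullclines A x"
    and dom_i: "A$k$i < A$i$i" and dom_rest: "\<forall>j. j \<noteq> i \<longrightarrow> A$k$j \<le> A$i$j"
  shows "x$i \<le> 0"
proof (rule ccontr)
  assume "\<not> x$i \<le> 0"
  hence xi: "0 < x$i" by simp
  have "(\<Sum>j\<in>UNIV-{i}. A$k$j * x$j) \<le> (\<Sum>j\<in>UNIV-{i}. A$i$j * x$j)"
    using dom_rest xn unfolding nonneg_def by (intro sum_mono mult_right_mono) auto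
  moreover have "A$k$i * x$i < A$i$i * x$i" using dom_i xi by (rule mult_strict_right_mono)
  ultimately have "alpha A k x < alpha A i x"
    using alpha_split[of A k x i] alpha_split[of A i x i] by simp
  thus False using ak below xi unfolding below_nullclines_def by fastforce
qed

text \<open>Write P = 1 - x_i a_ii and Q = 1 - x_i a_ki, so
  that the remainders of alpha_i x and alpha_k x are at most P and equal to Q, with
  0 \<le> P < Q.  If x_i exceeded every crossing ratio, then a_kj P \<le> a_ij Q for all j \<noteq> i,
  strictly where a_ij < a_kj, and comparing the two remainders yields a contradiction.\<close>
lemma exists_crossing_ratio_bound:
  assumes nn: "\<forall>i j. A$i$j \<ge> 0" and aii: "0 < A$i$i" and xn: "nonneg x"
    and xi: "0 < x$i" and ak: "alpha A k x = 1" and ai: "alpha A i x \<le> 1"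
    and dom_i: "A$k$i < A$i$i"
  shows "\<exists>j. j \<noteq> i \<and> A$i$j < A$k$j \<and> x$i \<le> crossing_ratio A i j k"
proof (rule ccontr)
  assume no_bound: "\<not> ?thesis"
  define P where "P = 1 - x$i * A$i$i"
  define Q where "Q = 1 - x$i * A$k$i"
  define R where "R = UNIV - {i}"
  have xnn: "\<And>j. 0 \<le> x$j" using xn unfolding nonneg_def by auto
  have rest_k: "(\<Sum>j\<in>R. A$k$j * x$j) = Q"
    using alpha_split[of A k x i] ak unfolding Q_def R_def by (simp add: mult.commute)
  have rest_i: "(\<Sum>j\<in>R. A$i$j * x$j) \<le> P"
    using alpha_split[of A i x i] ai unfolding P_def R_def by (simp add: mult.commute)
  have P_nonneg: "0 \<le> P" using rest_i alpha_rest_nonneg[OF nn xn, of i i] unfolding R_def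
    by linarith
  have P_less_Q: "P < Q" unfolding P_def Q_def using dom_i xi by simp
  have strict: "A$k$j * P < A$i$j * Q" if "j \<in> R" "A$i$j < A$k$j" for j
  proof -
    have "\<not> x$i \<le> crossing_ratio A i j k" using no_bound that unfolding R_def by blast
    thus ?thesis
      using crossing_ratio_threshold(2)[OF aii dom_i _ that(2), of "x$i"] nn
      unfolding crossing_ratio_def P_def Q_def by (auto simp: mult.commute)
  qed
  have weak: "A$k$j * x$j * P \<le> A$i$j * x$j * Q" if "j \<in> R" for j
  proof -
    have "A$k$j * P \<le> A$i$j * Q"
    proof (cases "A$i$j < A$k$j")
      case True thus ?thesis using strict[OF that] by simp
    next
      case False
      hence "A$k$j * P \<le> A$i$j * P" using P_nonneg by (simp add: mult_right_mono)
      also have "\<dots> \<le> A$i$j * Q" using P_less_Q nn by (simp add: mult_left_mono)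
      finally show ?thesis .
    qed
    hence "A$k$j * P * x$j \<le> A$i$j * Q * x$j" using xnn[of j] by (rule mult_right_mono)
    thus ?thesis by (simp add: ac_simps)
  qed
  show False
  proof (cases "\<exists>j\<in>R. A$i$j < A$k$j \<and> 0 < x$j")
    case True
    then obtain j where j: "j \<in> R" "A$i$j < A$k$j" "0 < x$j" by blast
    have "A$k$j * x$j * P < A$i$j * x$j * Q"
      using mult_strict_right_mono[OF strict[OF j(1,2)] j(3)] by (simp add: algebra_simps)
    hence "(\<Sum>j\<in>R. A$k$j * x$j * P) < (\<Sum>j\<in>R. A$i$j * x$j * Q)"
      using weak j(1) by (intro sum_strict_mono_ex1) auto
    hence "Q * P < (\<Sum>j\<in>R. A$i$j * x$j) * Q"
      by (simp add: sum_distrib_right[symmetric] rest_k)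
    also have "\<dots> \<le> P * Q" using rest_i P_less_Q P_nonneg by (simp add: mult_right_mono)
    finally show False by simp
  next
    case False
    have "Q \<le> (\<Sum>j\<in>R. A$i$j * x$j)"
      unfolding rest_k[symmetric]
    proof (rule sum_mono)
      fix j assume "j \<in> R"
      thus "A$k$j * x$j \<le> A$i$j * x$j"
        using False xnn[of j] by (cases "0 < x$j") (auto simp: mult_right_mono)
    qed
    thus False using rest_i P_less_Q by simp
  qed
qed

text \<open>Third branch of U: x_i is bounded by the largest crossing ratio.  The set of ratios
  is finite and, under the branch hypotheses, nonempty with positive elements, which
  covers the case x_i = 0.\<close>
lemma coord_le_max_crossing_ratio:
  assumes nn: "\<forall>i j. A$i$j \<ge> 0" and pos: "\<forall>i. 0 < A$i$i" and xn: "nonneg x"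
    and ak: "alpha A k x = 1" and below: "below_nullclines A x" and ik: "i \<noteq> k"
    and dom: "\<forall>j. j \<noteq> i \<longrightarrow> A$j$i < A$i$i"
    and cross: "\<exists>j l. j \<noteq> i \<and> l \<noteq> i \<and> A$i$j < A$l$j"
  shows "x$i \<le> Max {crossing_ratio A i j l | j l. j \<noteq> i \<and> l \<noteq> i \<and> A$i$j < A$l$j}"
    (is "_ \<le> Max ?S")
proof -
  have "?S \<subseteq> (\<lambda>(j, l). crossing_ratio A i j l) ` UNIV" by auto
  hence fin: "finite ?S" by (rule finite_subset) simp
  have ratio_pos: "0 < crossing_ratio A i j l" if "l \<noteq> i" "A$i$j < A$l$j" for j l
    using crossing_ratio_threshold(1)[of "A$i$i" "A$l$i" "A$i$j" "A$l$j"] pos dom nn that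
    unfolding crossing_ratio_def by (simp add: divide_pos_pos)
  obtain j l where jl: "j \<noteq> i" "l \<noteq> i" "A$i$j < A$l$j" using cross by blast
  have "0 < Max ?S"
    using ratio_pos[OF jl(2,3)] Max_ge[OF fin, of "crossing_ratio A i j l"] jl by fastforce
  show ?thesis
  proof (cases "0 < x$i")
    case True
    have ai: "alpha A i x \<le> 1" using below True unfolding below_nullclines_def by blast
    have "A$k$i < A$i$i" using dom ik by auto
    then obtain m where "m \<noteq> i" "A$i$m < A$k$m" "x$i \<le> crossing_ratio A i m k"
      using exists_crossing_ratio_bound[OF nn _ xn True ak ai] pos by blast
    thus ?thesis using Max_ge[OF fin, of "crossing_ratio A i m k"] ik by fastforce
  next
    case False
    thus ?thesis using \<open>0 < Max ?S\<close> by simp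
  qed
qed

lemma gamma_point_le_Ubound:
  assumes nn: "\<forall>i j. A$i$j \<ge> 0" and pos: "\<forall>i. 0 < A$i$i" and xn: "nonneg x"
    and ak: "alpha A k x = 1" and below: "below_nullclines A x" and ik: "i \<noteq> k"
  shows "x$i \<le> Ubound A $ i"
proof -
  consider (diag) "\<exists>j. j \<noteq> i \<and> (A$i$i \<le> A$j$i \<or> A$i$j = 0)"
    | (dominated) "\<not> (\<exists>j. j \<noteq> i \<and> (A$i$i \<le> A$j$i \<or> A$i$j = 0))"
        "(\<forall>j. j \<noteq> i \<longrightarrow> A$j$i < A$i$i) \<and>
         (\<forall>j l. j \<noteq> i \<longrightarrow> l \<noteq> i \<longrightarrow> A$j$l \<le> A$i$l)"
    | (crossing) "\<not> (\<exists>j. j \<noteq> i \<and> (A$i$i \<le> A$j$i \<or> A$i$j = 0))"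
        "\<not> ((\<forall>j. j \<noteq> i \<longrightarrow> A$j$i < A$i$i) \<and>
         (\<forall>j l. j \<noteq> i \<longrightarrow> l \<noteq> i \<longrightarrow> A$j$l \<le> A$i$l))"
    by blast
  thus ?thesis
  proof cases
    case diag
    hence "Ubound A $ i = 1 / A$i$i" unfolding Ubound_def by simp
    thus ?thesis using coord_le_inv_diag[OF nn _ xn below] pos by simp
  next
    case dominated
    have "Ubound A $ i = 0"
      unfolding Ubound_def vec_lambda_beta if_not_P[OF dominated(1)] if_P[OF dominated(2)] ..
    moreover have "x$i \<le> 0" using coord_zero_if_dominated[OF xn ak below] dominated ik by auto
    ultimately show ?thesis by simp
  next
    case crossing
    have dom: "\<forall>j. j \<noteq> i \<longrightarrow> A$j$i < A$i$i" using crossing(1) by auto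
    hence "\<exists>j l. j \<noteq> i \<and> l \<noteq> i \<and> A$i$j < A$l$j" using crossing(2) by (auto simp: not_le)
    from coord_le_max_crossing_ratio[OF nn pos xn ak below ik dom this]
    show ?thesis
      unfolding Ubound_def vec_lambda_beta if_not_P[OF crossing(1)] if_not_P[OF crossing(2)]
        crossing_ratio_def .
  qed
qed

lemma gamma_point_in_box:
  assumes nn: "\<forall>i j. A$i$j \<ge> 0" and pos: "\<forall>i. 0 < A$i$i"
    and x: "x \<in> gamma A k" and xk: "x$k = 0" and below: "below_nullclines A x"
  shows "x \<in> box 0 (restr (UNIV - {k}) (Ubound A))"
  using x xk gamma_point_le_Ubound[OF nn pos _ _ below] unfolding gamma_def box_def restr_def
  by (auto simp: nonneg_def)

text \<open>Such a point lies in the order interval; it has a coordinate j \<noteq> k with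
  x_j > 0 since alpha_k x = 1, and there alpha_j x \<le> 1.\<close>
lemma cond_C_excludes_below_nullclines:
  assumes C: "cond_C A k" and nn: "\<forall>i j. A$i$j \<ge> 0" and pos: "\<forall>i. 0 < A$i$i"
    and x: "x \<in> gamma A k" and xk: "x$k = 0"
  shows "\<not> below_nullclines A x"
proof
  assume below: "below_nullclines A x"
  define V where "V = restr (UNIV - {k}) (Ubound A)"
  have in_box: "x \<in> box 0 V" unfolding V_def by (rule gamma_point_in_box[OF nn pos x xk below])
  have "\<exists>j. 0 < x$j"
  proof (rule ccontr)
    assume "\<nexists>j. 0 < x$j"
    hence "\<forall>j. x$j = 0" using x unfolding gamma_def nonneg_def by (simp add: order.antisym not_less)
    hence "alpha A k x = 0" unfolding alpha_def by simp
    thus False using x unfolding gamma_def by simp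
  qed
  then obtain j where j: "0 < x$j" ..
  have "j \<noteq> k" using j xk by auto
  from C show False unfolding cond_C_def V_def[symmetric]
  proof
    assume "alpha A k V < 1"
    moreover have "alpha A k x \<le> alpha A k V"
      using alpha_mono[OF nn] in_box unfolding box_def by blast
    ultimately show False using x unfolding gamma_def by simp
  next
    assume "\<forall>y\<in>gamma A k \<inter> box 0 V. \<forall>j. j \<noteq> k \<longrightarrow> 1 < alpha A j y"
    hence "1 < alpha A j x" using x in_box \<open>j \<noteq> k\<close> by blast
    thus False using below j unfolding below_nullclines_def by fastforce
  qed
qed

text \<open>Rescaling an equilibrium u with alpha_k u \<ge> 1 by 1/alpha_k u lands on gamma_k and
  below the nullclines, since alpha_i takes the value 1/alpha_k u on the support.\<close>
lemma rescaled_equilibrium: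
  assumes eq: "equilibrium b A u" and b: "\<forall>i. b$i > 0" and m: "1 \<le> alpha A k u"
  defines "x \<equiv> (1 / alpha A k u) *\<^sub>R u"
  shows "x \<in> gamma A k" and "below_nullclines A x"
proof -
  have xn: "nonneg x"
    using eq m unfolding x_def equilibrium_def nonneg_def by simp
  thus "x \<in> gamma A k" using m unfolding gamma_def x_def by (simp add: alpha_scale)
  show "below_nullclines A x"
    unfolding below_nullclines_def
  proof (intro allI impI)
    fix i assume "0 < x$i"
    hence "alpha A i u = 1" using equilibrium_coord[OF eq] b unfolding x_def by force
    thus "alpha A i x \<le> 1" using m unfolding x_def by (simp add: alpha_scale)
  qed
qed

theorem mainTheorem7:
  fixes b :: "real^'n" and A :: "real^'n^'n" and k :: 'n and u :: "real^'n"
  assumes "CARD('n) \<ge> 2"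
    and "\<forall>i. b$i > 0"
    and "\<forall>i. A$i$i > 0"
    and "\<forall>i j. A$i$j \<ge> 0"
    and "cond_C A k"
    and "equilibrium b A u"
    and "u \<in> pi_face k"
  shows "alpha A k u < 1"
proof (rule ccontr)
  assume "\<not> alpha A k u < 1"
  hence m: "1 \<le> alpha A k u" by simp
  define x where "x = (1 / alpha A k u) *\<^sub>R u"
  have "x \<in> gamma A k" and "below_nullclines A x"
    using rescaled_equilibrium[OF assms(6,2) m] unfolding x_def by auto
  moreover have "x$k = 0" using assms(7) unfolding x_def pi_face_def by simp
  ultimately show False using cond_C_excludes_below_nullclines[OF assms(5,4,3)] by blast
qed

end
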